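(* Let $a>0$ and $0<h<\frac{\pi}{2a}$. For each integer $m\ge2$, let $\alpha_m$ be the $m$-th positive solution $q$ (in increasing order) of $\tan(hq)=\frac{2aq}{q^2-a^2}$. Then $\alpha_m\in\left[\frac{(m-1)\pi}{h},\frac{(m-1)\pi}{h}+\frac{\pi}{2h}\right]$ for all $m\ge2$. *)

theory Defs
  imports Complex_Main
begin

definition tan_sols :: "real \<Rightarrow> real \<Rightarrow> real set" where
  "tan_sols a h = {q. q > 0 \<and> cos (h * q) \<noteq> 0 \<and> q^2 \<noteq> a^2 \<and>
                       tan (h * q) = 2 * a * q / (q^2 - a^2)}"

definition is_mth_sol :: "real \<Rightarrow> real \<Rightarrow> nat \<Rightarrow> real \<Rightarrow> bool" where
  "is_mth_sol a h m q \<longleftrightarrow> q \<in> tan_sols a h \<and>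
     finite {s \<in> tan_sols a h. s < q} \<and> card {s \<in> tan_sols a h. s < q} = m - 1"

end

theory Submission
  imports Defs
begin

(* Put x = h q and b = a h, so 0 < b < pi/2. Since tan (2 arctan (b/x)) = 2 b x / (x^2 - b^2),
   the equation says tan x = tan y for y = 2 arctan (b/x) in (0, pi), i.e. x - y = k pi with k
   a natural number. The function x - 2 arctan (b/x) increases strictly from -pi to infinity on
   (0, infinity), so the solutions are x_0 < x_1 < ... where x_k is its unique root at k pi, and the
   m-th solution is x_(m-1) / h. For k >= 1 we get x_k >= k pi > b, so 2 arctan (b/x_k) lies in
   (0, pi/2]. *)

definition arctan_gap :: "real \<Rightarrow> real \<Rightarrow> real" where
  "arctan_gap b x = x - 2 * arctan (b / x)"

lemma strict_mono_on_arctan_gap: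
  assumes "0 < b"
  shows "strict_mono_on {0<..} (arctan_gap b)"
proof (rule strict_mono_onI)
  fix x y :: real
  assume "x \<in> {0<..}" "x < y"
  then have "arctan (b / y) < arctan (b / x)"
    using assms by (simp add: frac_less2 arctan_less_iff)
  then show "arctan_gap b x < arctan_gap b y"
    using \<open>x < y\<close> by (simp add: arctan_gap_def)
qed

lemma continuous_on_arctan_gap: "continuous_on {0<..} (arctan_gap b)"
  unfolding arctan_gap_def by (intro continuous_intros) auto

lemma arctan_gap_surj:
  assumes "0 < b" "0 \<le> c"
  obtains x where "0 < x" "arctan_gap b x = c"
proof -
  define lo where "lo = min b 1"
  have lo: "0 < lo" "lo \<le> 1" "1 \<le> b / lo"
    using assms by (auto simp: lo_def)
  have "pi / 4 \<le> arctan (b / lo)"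
    using lo(3) by (simp add: arctan_le_iff flip: arctan_one)
  then have "arctan_gap b lo \<le> c"
    using lo(2) pi_ge_two assms(2) by (simp add: arctan_gap_def)
  moreover have "c \<le> arctan_gap b (c + pi)"
    using arctan_bounded[of "b / (c + pi)"] by (simp add: arctan_gap_def)
  moreover have "lo \<le> c + pi"
    using lo(2) pi_ge_two assms(2) by linarith
  moreover have "continuous_on {lo..c + pi} (arctan_gap b)"
    using continuous_on_arctan_gap by (rule continuous_on_subset) (use lo in auto)
  ultimately obtain x where "lo \<le> x" "arctan_gap b x = c"
    using IVT' by blast
  with lo(1) show thesis
    by (intro that) auto
qed

lemma cos_double_arctan: "cos (2 * arctan t) = (1 - t\<^sup>2) / (1 + t\<^sup>2)"
  by (simp add: cos_double cos_arctan sin_arctan power_divide diff_divide_distrib)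

lemma tan_double_arctan:
  assumes "t\<^sup>2 \<noteq> 1"
  shows "tan (2 * arctan t) = 2 * t / (1 - t\<^sup>2)"
proof -
  have "1 + t\<^sup>2 \<noteq> 0"
    using zero_le_power2[of t] by linarith
  then have "cos (2 * arctan t) \<noteq> 0"
    using assms by (simp add: cos_double_arctan)
  then show ?thesis
    using tan_double[of "arctan t"] by (simp add: tan_arctan)
qed

lemma tan_eq_iff_sin_diff_eq_0:
  assumes "cos y \<noteq> 0"
  shows "cos x \<noteq> 0 \<and> tan x = tan y \<longleftrightarrow> sin (x - y) = 0"
proof
  assume "cos x \<noteq> 0 \<and> tan x = tan y"
  then have "sin x * cos y = sin y * cos x"
    using assms by (auto simp: tan_def frac_eq_eq)
  then show "sin (x - y) = 0"
    by (simp add: sin_diff mult.commute)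
next
  assume "sin (x - y) = 0"
  then have cross: "sin x * cos y = cos x * sin y"
    by (simp add: sin_diff)
  have "cos x \<noteq> 0"
  proof
    assume "cos x = 0"
    then have "sin x \<noteq> 0"
      using sin_cos_squared_add[of x] by auto
    with cross \<open>cos x = 0\<close> assms show False
      by simp
  qed
  with cross assms show "cos x \<noteq> 0 \<and> tan x = tan y"
    by (simp add: tan_def frac_eq_eq mult.commute)
qed

lemma sin_eq_0_iff_nat_multiple_pi:
  assumes "- pi < z"
  shows "sin z = 0 \<longleftrightarrow> (\<exists>k::nat. z = real k * pi)"
proof
  assume "sin z = 0"
  then obtain i :: int where i: "z = of_int i * pi"
    by (auto simp: sin_zero_iff_int2)
  with assms have "(- 1) * pi < of_int i * pi"
    by simp
  then have "0 \<le> i"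
    by (subst (asm) mult_less_cancel_right_pos) simp_all
  with i show "\<exists>k::nat. z = real k * pi"
    by (intro exI[of _ "nat i"]) simp
next
  assume "\<exists>k::nat. z = real k * pi"
  then show "sin z = 0"
    by (auto simp: sin_zero_iff_int2 intro: exI[of _ "int k" for k])
qed

lemma tan_eq_rational_iff_arctan_gap:
  assumes "0 < b" "b < pi / 2" "0 < x"
  shows "cos x \<noteq> 0 \<and> x\<^sup>2 \<noteq> b\<^sup>2 \<and> tan x = 2 * b * x / (x\<^sup>2 - b\<^sup>2)
    \<longleftrightarrow> (\<exists>k::nat. arctan_gap b x = real k * pi)"
proof -
  define y where "y = 2 * arctan (b / x)"
  have y_bounds: "0 < y" "y < pi"
    using arctan_bounded[of "b / x"] assms by (auto simp: y_def)
  have ratio_sq: "(b / x)\<^sup>2 = 1 \<longleftrightarrow> x\<^sup>2 = b\<^sup>2"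
    using assms(3) by (auto simp: power_divide)
  have "1 + (b / x)\<^sup>2 \<noteq> 0"
    using zero_le_power2[of "b / x"] by linarith
  then have cos_y: "cos y \<noteq> 0 \<longleftrightarrow> x\<^sup>2 \<noteq> b\<^sup>2"
    using ratio_sq by (simp add: y_def cos_double_arctan)
  have tan_y: "tan y = 2 * b * x / (x\<^sup>2 - b\<^sup>2)" if "x\<^sup>2 \<noteq> b\<^sup>2"
    using that ratio_sq assms(3) by (simp add: y_def tan_double_arctan field_simps) algebra
  have sin_iff: "sin (x - y) = 0 \<longleftrightarrow> (\<exists>k::nat. x - y = real k * pi)"
    using y_bounds assms(3) by (intro sin_eq_0_iff_nat_multiple_pi) linarith
  \<comment> \<open>The only point where cos y = 0 is x = b; there x - y = b - pi/2 < 0 needs b < pi/2.\<close>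
  have x_ne_b: "x \<noteq> b" if "x - y = real k * pi" for k :: nat
  proof
    assume "x = b"
    then have "y = pi / 2"
      using assms(1) by (simp add: y_def arctan_one)
    with that \<open>x = b\<close> assms(2) have "real k * pi < 0"
      by linarith
    then show False
      by (simp add: mult_less_0_iff)
  qed
  have "cos x \<noteq> 0 \<and> x\<^sup>2 \<noteq> b\<^sup>2 \<and> tan x = 2 * b * x / (x\<^sup>2 - b\<^sup>2)
      \<longleftrightarrow> cos y \<noteq> 0 \<and> sin (x - y) = 0"
    using cos_y tan_y tan_eq_iff_sin_diff_eq_0[of y x] by auto
  also have "\<dots> \<longleftrightarrow> (\<exists>k::nat. x - y = real k * pi)"
    using sin_iff cos_y x_ne_b assms(1,3) by (auto simp: power2_eq_iff)
  finally show ?thesis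
    by (simp add: arctan_gap_def y_def)
qed

lemma tan_sols_iff_arctan_gap:
  assumes "0 < a" "0 < h" "a * h < pi / 2"
  shows "q \<in> tan_sols a h \<longleftrightarrow> 0 < q \<and> (\<exists>k::nat. arctan_gap (a * h) (h * q) = real k * pi)"
proof -
  have sq: "(h * q)\<^sup>2 - (a * h)\<^sup>2 = h\<^sup>2 * (q\<^sup>2 - a\<^sup>2)"
    by (simp add: algebra_simps)
  have "2 * (a * h) * (h * q) / ((h * q)\<^sup>2 - (a * h)\<^sup>2) = 2 * a * q / (q\<^sup>2 - a\<^sup>2)"
    using assms(2) unfolding sq by (simp add: power2_eq_square mult.assoc mult.left_commute)
  moreover have "(h * q)\<^sup>2 \<noteq> (a * h)\<^sup>2 \<longleftrightarrow> q\<^sup>2 \<noteq> a\<^sup>2"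
    using assms(2) by (simp add: power_mult_distrib mult.commute)
  ultimately show ?thesis
    using tan_eq_rational_iff_arctan_gap[of "a * h" "h * q"] assms
    by (auto simp: tan_sols_def)
qed

definition arctan_gap_root :: "real \<Rightarrow> nat \<Rightarrow> real" where
  "arctan_gap_root b k = (THE x. 0 < x \<and> arctan_gap b x = real k * pi)"

lemma arctan_gap_root_iff:
  assumes "0 < b"
  shows "0 < x \<and> arctan_gap b x = real k * pi \<longleftrightarrow> x = arctan_gap_root b k"
proof -
  have unique: "\<exists>!x. 0 < x \<and> arctan_gap b x = real k * pi"
  proof (rule ex_ex1I)
    show "\<exists>x. 0 < x \<and> arctan_gap b x = real k * pi"
      using arctan_gap_surj[OF assms, of "real k * pi"] by auto
  next
    fix x y
    assume "0 < x \<and> arctan_gap b x = real k * pi" "0 < y \<and> arctan_gap b y = real k * pi"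
    then show "x = y"
      using strict_mono_on_eqD[OF strict_mono_on_arctan_gap[OF assms]] by force
  qed
  show ?thesis
  proof
    assume "0 < x \<and> arctan_gap b x = real k * pi"
    then show "x = arctan_gap_root b k"
      unfolding arctan_gap_root_def by (rule the1_equality[OF unique, symmetric])
  next
    assume "x = arctan_gap_root b k"
    then show "0 < x \<and> arctan_gap b x = real k * pi"
      using theI'[OF unique] by (simp add: arctan_gap_root_def)
  qed
qed

lemma arctan_gap_root:
  assumes "0 < b"
  shows "0 < arctan_gap_root b k" "arctan_gap b (arctan_gap_root b k) = real k * pi"
  using arctan_gap_root_iff[OF assms, of "arctan_gap_root b k" k] by simp_all

lemma strict_mono_arctan_gap_root:
  assumes "0 < b"
  shows "strict_mono (arctan_gap_root b)"
proof (rule strict_monoI)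
  fix k l :: nat
  assume "k < l"
  then show "arctan_gap_root b k < arctan_gap_root b l"
    using strict_mono_on_less[OF strict_mono_on_arctan_gap[OF assms],
        of "arctan_gap_root b k" "arctan_gap_root b l"]
    by (simp add: arctan_gap_root[OF assms])
qed

lemma arctan_gap_root_bounds:
  assumes "0 < b" "b \<le> pi" "1 \<le> k"
  shows "real k * pi \<le> arctan_gap_root b k" "arctan_gap_root b k \<le> real k * pi + pi / 2"
proof -
  define x where "x = arctan_gap_root b k"
  have x: "0 < x" "x = real k * pi + 2 * arctan (b / x)"
    using arctan_gap_root[OF assms(1), of k] by (auto simp: x_def arctan_gap_def)
  then have "0 < arctan (b / x)"
    using assms(1) by simp
  with x show "real k * pi \<le> x"
    by linarith
  moreover have "pi \<le> real k * pi"
    using assms(3) by simp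
  ultimately have "b \<le> x"
    using assms(2) by linarith
  then have "b / x \<le> 1"
    using x(1) by simp
  then have "arctan (b / x) \<le> pi / 4"
    by (simp add: arctan_le_iff flip: arctan_one)
  with x show "x \<le> real k * pi + pi / 2"
    by linarith
qed

lemma tan_sols_eq_range:
  assumes "0 < a" "0 < h" "a * h < pi / 2"
  shows "tan_sols a h = range (\<lambda>k. arctan_gap_root (a * h) k / h)"
proof -
  have "q \<in> tan_sols a h \<longleftrightarrow> (\<exists>k. h * q = arctan_gap_root (a * h) k)" for q
    using tan_sols_iff_arctan_gap[OF assms] arctan_gap_root_iff[of "a * h" "h * q"] assms(1,2)
    by (auto simp: zero_less_mult_iff)
  then show ?thesis
    using assms(2) by (auto simp: field_simps)
qed

lemma card_less_in_range_strict_mono_iff: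
  fixes f :: "nat \<Rightarrow> 'a::linorder"
  assumes "strict_mono f"
  shows "q \<in> range f \<and> finite {s \<in> range f. s < q} \<and> card {s \<in> range f. s < q} = n
    \<longleftrightarrow> q = f n"
proof -
  have below: "{s \<in> range f. s < f j} = f ` {..<j}" for j
    using assms by (auto simp: strict_mono_less)
  have "card {s \<in> range f. s < f j} = j" for j
    unfolding below using strict_mono_imp_inj_on[OF assms]
    by (simp add: card_image inj_on_subset)
  then show ?thesis
    unfolding below by (auto simp: below)
qed

lemma is_mth_sol_iff:
  assumes "0 < a" "0 < h" "a * h < pi / 2"
  shows "is_mth_sol a h m q \<longleftrightarrow> q = arctan_gap_root (a * h) (m - 1) / h"
proof -
  have "strict_mono (\<lambda>k. arctan_gap_root (a * h) k / h)"
    using strict_mono_arctan_gap_root[of "a * h"] assms(1,2)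
    by (simp add: strict_mono_def divide_strict_right_mono)
  then show ?thesis
    unfolding is_mth_sol_def tan_sols_eq_range[OF assms]
    by (rule card_less_in_range_strict_mono_iff)
qed

theorem lemma3p2:
  fixes a h :: real and m :: nat
  assumes "a > 0" and "h > 0" and "h < pi / (2 * a)" and "m \<ge> 2"
  shows "(\<exists>q. is_mth_sol a h m q) \<and>
         (\<forall>q. is_mth_sol a h m q \<longrightarrow>
              real (m - 1) * pi / h \<le> q \<and> q \<le> real (m - 1) * pi / h + pi / (2 * h))"
proof -
  have small: "a * h < pi / 2"
    using assms(1,3) by (simp add: pos_less_divide_eq mult_ac)
  define x where "x = arctan_gap_root (a * h) (m - 1)"
  have "a * h \<le> pi"
    using small pi_gt_zero by linarith
  with assms have "0 < a * h" "a * h \<le> pi" "1 \<le> m - 1"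
    by simp_all
  then have "real (m - 1) * pi \<le> x" "x \<le> real (m - 1) * pi + pi / 2"
    unfolding x_def by (rule arctan_gap_root_bounds)+
  moreover have "(real (m - 1) * pi + pi / 2) / h = real (m - 1) * pi / h + pi / (2 * h)"
    by (simp add: add_divide_distrib)
  ultimately have "real (m - 1) * pi / h \<le> x / h" "x / h \<le> real (m - 1) * pi / h + pi / (2 * h)"
    using assms(2) by (metis divide_right_mono less_imp_le)+
  then show ?thesis
    using is_mth_sol_iff[OF assms(1,2) small] by (auto simp: x_def)
qed

end
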